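(* Let $\mathfrak{h}$ be a finite-dimensional Hilbert space and let $\mathcal{L}_t=\sum_{m\in\mathbb{Z}}\mathcal{L}_m e^{-\mathrm{i}m\omega t}$ be a $T$-periodic Lindbladian ($\omega=2\pi/T$) on operators on $\mathfrak{h}$, as described in the context. For every integer $N\ge0$, the truncated van Vleck effective Liouvillian $\mathcal{L}_\mathrm{eff}=\sum_{k=0}^{N}\mathcal{L}_\mathrm{eff}^{(k)}$ has at least one eigenvalue equal to zero.
   Context: The Lindbladian is $\mathcal{L}_t(\rho)=-\mathrm{i}[H(t),\rho]+\sum_\alpha\big[L_\alpha(t)\rho L_\alpha^\dagger(t)-\tfrac12\{L_\alpha^\dagger(t)L_\alpha(t),\rho\}\big]$, where $H(t)=H(t+T)$ is Hermitian and the (finitely many) jump operators satisfy $L_\alpha(t+T)=L_\alpha(t)$. Writing $H(t)=\sum_m H_m e^{-\mathrm{i}m\omega t}$ and $L_\alpha(t)=\sum_m L_{\alpha,m}e^{-\mathrm{i}m\omega t}$, the Fourier components are $\mathcal{L}_m=\mathcal{H}_m+\mathcal{D}_m$ with $\mathcal{H}_m(\rho)=-\mathrm{i}[H_m,\rho]$ and $\mathcal{D}_m(\rho)=\sum_{\alpha,n}\big[L_{\alpha,m-n}\rho L_{\alpha,n}^\dagger-\tfrac12\{L_{\alpha,n}^\dagger L_{\alpha,m-n},\rho\}\big]$ (all Fourier sums assumed convergent). The van Vleck high-frequency expansion is defined via the ansatz $\mathcal{V}(t,t')=e^{\mathcal{G}_t}e^{\mathcal{L}_\mathrm{eff}(t-t')}e^{-\mathcal{G}_{t'}}$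 for the propagator, with $\mathcal{G}_t$ periodic, $\mathcal{L}_\mathrm{eff}=\sum_{k\ge0}\mathcal{L}_\mathrm{eff}^{(k)}$, $\mathcal{L}_\mathrm{eff}^{(k)}=O(\omega^{-k})$; it is obtained from the isolated-system van Vleck expansion by the substitution $H_m\to\mathrm{i}\mathcal{L}_m$, $H_\mathrm{eff}\to\mathrm{i}\mathcal{L}_\mathrm{eff}$. Explicitly $\mathcal{L}_\mathrm{eff}^{(0)}=\mathcal{L}_0$, $\mathrm{i}\mathcal{L}_\mathrm{eff}^{(1)}=\sum_{m\ne0}\frac{[\mathrm{i}\mathcal{L}_{-m},\mathrm{i}\mathcal{L}_m]}{2m\omega}$, $\mathrm{i}\mathcal{L}_\mathrm{eff}^{(2)}=\sum_{m\ne0}\frac{[[\mathrm{i}\mathcal{L}_{-m},\mathrm{i}\mathcal{L}_0],\mathrm{i}\mathcal{L}_m]}{2m^2\omega^2}+\sum_{m\ne0}\sum_{n\ne0,m}\frac{[[\mathrm{i}\mathcal{L}_{-m},\mathrm{i}\mathcal{L}_{m-n}],\mathrm{i}\mathcal{L}_n]}{3mn\omega^2}$, and in general each $\mathcal{L}_\mathrm{eff}^{(k)}$ with $k\ge1$ is a linear combination (with complex coefficients) of nested commutators of the superoperators $\mathcal{L}_m$. $\mathcal{L}_\mathrm{eff}$ is regarded as a linear map on the space of operators on $\mathfrak{h}$. *)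

theory Defs
  imports "HOL-Analysis.Analysis"
begin

text \<open>Operators on a finite-dimensional Hilbert space \<open>\<h> = \<complex>^'n\<close> are complex
  matrices of type \<open>complex^'n^'n\<close>; superoperators are maps between them.\<close>

definition adj :: "complex^'n^'n \<Rightarrow> complex^'n^'n" where
  "adj M = (\<chi> i j. cnj (M $ j $ i))"

definition csc :: "complex \<Rightarrow> complex^'n^'n \<Rightarrow> complex^'n^'n" where
  "csc c M = (\<chi> i j. c * M $ i $ j)"

definition supcomm :: "('b \<Rightarrow> 'b::minus) \<Rightarrow> ('b \<Rightarrow> 'b) \<Rightarrow> 'b \<Rightarrow> 'b" where
  "supcomm A B = (\<lambda>x. A (B x) - B (A x))"

definition ham_comp :: "(int \<Rightarrow> complex^'n^'n) \<Rightarrow> int \<Rightarrow> complex^'n^'n \<Rightarrow> complex^'n^'n" where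
  "ham_comp H m \<rho> = csc (- \<i>) (H m ** \<rho> - \<rho> ** H m)"

definition diss_term :: "('j \<Rightarrow> int \<Rightarrow> complex^'n^'n) \<Rightarrow> 'j \<Rightarrow> int \<Rightarrow> complex^'n^'n \<Rightarrow> int \<Rightarrow> complex^'n^'n" where
  "diss_term L \<alpha> m \<rho> n =
     L \<alpha> (m - n) ** \<rho> ** adj (L \<alpha> n)
     - csc (1/2) (adj (L \<alpha> n) ** L \<alpha> (m - n) ** \<rho> + \<rho> ** (adj (L \<alpha> n) ** L \<alpha> (m - n)))"

definition diss_comp :: "('j::finite \<Rightarrow> int \<Rightarrow> complex^'n^'n) \<Rightarrow> int \<Rightarrow> complex^'n^'n \<Rightarrow> complex^'n^'n" where
  "diss_comp L m \<rho> = (\<Sum>\<alpha>\<in>UNIV. \<Sum>\<^sub>\<infinity>n. diss_term L \<alpha> m \<rho> n)"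

definition lind_comp :: "(int \<Rightarrow> complex^'n^'n) \<Rightarrow> ('j::finite \<Rightarrow> int \<Rightarrow> complex^'n^'n)
    \<Rightarrow> int \<Rightarrow> complex^'n^'n \<Rightarrow> complex^'n^'n" where
  "lind_comp H L m = (\<lambda>\<rho>. ham_comp H m \<rho> + diss_comp L m \<rho>)"

inductive nested_comm :: "(int \<Rightarrow> ('b \<Rightarrow> 'b::minus)) \<Rightarrow> ('b \<Rightarrow> 'b) \<Rightarrow> bool" for Lm where
  gen: "nested_comm Lm (Lm m)"
| br: "nested_comm Lm X \<Longrightarrow> nested_comm Lm Y \<Longrightarrow> nested_comm Lm (supcomm X Y)"

end

theory Submission
  imports Defs
begin

text \<open>By cyclicity of the trace, each Fourier component \<open>\<L>\<^sub>m\<close> has traceless range: the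
  commutator \<open>[H\<^sub>m,\<rho>]\<close> is traceless, and in every summand of \<open>\<D>\<^sub>m\<close> the jump term
  \<open>L \<rho> K\<^sup>\<dagger>\<close> cancels against the anticommutator \<open>{K\<^sup>\<dagger>L,\<rho>}/2\<close>. Tracelessness of the range is
  preserved by commutators and linear combinations, so the truncated \<open>\<L>\<^sub>e\<^sub>f\<^sub>f\<close> is a linear map
  of the finite-dimensional operator space whose range misses the identity. Not being
  surjective, it is not injective either, so it has a nonzero kernel vector.\<close>

lemma matrix_add_rdistrib: "(A + B) ** C = A ** C + B ** (C :: 'a::semiring_1^'n^'m)"
  by (vector matrix_matrix_mult_def sum.distrib[symmetric] field_simps)

lemma linear_matrix_mult_left: "linear (\<lambda>X. A ** (X :: 'a::real_algebra_1^'n^'m))"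
  by (rule linearI) (simp_all add: matrix_add_ldistrib matrix_scalar_ac scalar_matrix_assoc)

lemma linear_matrix_mult_right: "linear (\<lambda>X. (X :: 'a::real_algebra_1^'n^'m) ** A)"
  by (rule linearI) (simp_all add: matrix_add_rdistrib scalar_matrix_assoc)

lemma linear_matrix_mult_both: "linear (\<lambda>X. A ** X ** (B :: 'a::real_algebra_1^'p^'n))"
  using linear_compose[OF linear_matrix_mult_left linear_matrix_mult_right] by (simp add: o_def)

lemma linear_trace: "linear (trace :: 'a::real_algebra_1^'n^'n \<Rightarrow> 'a)"
  by (rule linearI) (simp_all add: trace_def sum.distrib scaleR_sum_right)

lemma bounded_linear_trace: "bounded_linear (trace :: 'a::{euclidean_space, real_algebra_1}^'n^'n \<Rightarrow> 'a)"
  using linear_trace linear_conv_bounded_linear by blast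

lemma trace_mat_1_neq_0: "trace (mat 1 :: 'a::real_algebra_1^'n^'n) \<noteq> 0"
proof -
  have "(of_nat CARD('n) :: 'a) = of_real (of_nat CARD('n))"
    by (rule of_real_of_nat_eq[symmetric])
  then show ?thesis
    by (simp add: trace_I)
qed

lemma linear_csc: "linear (csc c)"
  by (rule linearI) (simp_all add: csc_def vec_eq_iff algebra_simps scaleR_conv_of_real)

lemma trace_csc: "trace (csc c A) = c * trace A"
  by (simp add: trace_def csc_def sum_distrib_left)

lemma bounded_linear_infsum_eq_0:
  assumes "bounded_linear h" and "\<And>x. x \<in> A \<Longrightarrow> h (f x) = 0"
  shows "h (infsum f A) = 0"
proof (cases "f summable_on A")
  case True
  then have "((\<lambda>x. h (f x)) has_sum h (infsum f A)) A"
    using assms(1) has_sum_bounded_linear has_sum_infsum by blast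
  then show ?thesis
    using assms(2) has_sum_0 has_sum_unique by (metis (mono_tags, lifting) has_sum_cong)
next
  case False
  then show ?thesis
    using assms(1) by (simp add: infsum_not_exists linear_simps(3))
qed

lemma linear_infsum:
  fixes f :: "'i \<Rightarrow> 'a::real_vector \<Rightarrow> 'b::real_normed_vector"
  assumes "\<And>n. linear (f n)" and "\<And>x. (\<lambda>n. f n x) summable_on A"
  shows "linear (\<lambda>x. \<Sum>\<^sub>\<infinity>n\<in>A. f n x)"
proof (rule linearI)
  fix x y
  show "(\<Sum>\<^sub>\<infinity>n\<in>A. f n (x + y)) = (\<Sum>\<^sub>\<infinity>n\<in>A. f n x) + (\<Sum>\<^sub>\<infinity>n\<in>A. f n y)"
    using assms by (simp add: linear_add infsum_add)
next
  fix r x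
  show "(\<Sum>\<^sub>\<infinity>n\<in>A. f n (r *\<^sub>R x)) = r *\<^sub>R (\<Sum>\<^sub>\<infinity>n\<in>A. f n x)"
    using assms(1) by (simp add: linear_scale infsum_scaleR_right)
qed

lemma linear_supcomm:
  assumes "linear X" and "linear Y"
  shows "linear (supcomm X Y)"
  unfolding supcomm_def
  using linear_compose[OF assms(2,1)] linear_compose[OF assms]
  by (intro linear_compose_sub) (simp_all add: o_def)

lemma trace_supcomm:
  assumes "\<And>\<rho>. trace (X \<rho>) = 0" and "\<And>\<rho>. trace (Y \<rho>) = 0"
  shows "trace (supcomm X Y \<rho>) = (0 :: 'a::comm_ring_1)"
  by (simp add: supcomm_def trace_sub assms)

lemma linear_nested_comm:
  assumes "\<And>m. linear (Lm m)" and "nested_comm Lm X"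
  shows "linear X"
  using assms(2) by induction (simp_all add: assms(1) linear_supcomm)

lemma trace_nested_comm:
  assumes "\<And>m \<sigma>. trace (Lm m \<sigma>) = 0" and "nested_comm Lm X"
  shows "trace (X \<rho>) = (0 :: 'a::comm_ring_1)"
  using assms(2) by (induction arbitrary: \<rho>) (simp_all add: assms(1) trace_supcomm)

lemma linear_ham_comp: "linear (ham_comp H m)"
  unfolding ham_comp_def[abs_def]
  using linear_matrix_mult_left linear_matrix_mult_right
  by (intro linear_compose[OF linear_compose_sub linear_csc, unfolded o_def])

lemma trace_ham_comp: "trace (ham_comp H m \<rho>) = 0"
  by (simp add: ham_comp_def trace_csc trace_sub trace_mul_sym[of "H m" \<rho>])

lemma linear_diss_term: "linear (\<lambda>\<rho>. diss_term L \<alpha> m \<rho> n)"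
  unfolding diss_term_def
  by (intro linear_compose_sub linear_compose_add linear_matrix_mult_both linear_matrix_mult_left
      linear_matrix_mult_right
      linear_compose[OF _ linear_csc, unfolded o_def])

lemma trace_diss_term: "trace (diss_term L \<alpha> m \<rho> n) = 0"
proof -
  define A where "A = L \<alpha> (m - n)"
  define B where "B = adj (L \<alpha> n)"
  have "trace (A ** \<rho> ** B) = trace (B ** A ** \<rho>)"
    by (metis trace_mul_sym matrix_mul_assoc)
  moreover have "trace (\<rho> ** (B ** A)) = trace (B ** A ** \<rho>)"
    by (rule trace_mul_sym)
  ultimately show ?thesis
    unfolding diss_term_def A_def[symmetric] B_def[symmetric]
    by (simp add: trace_sub trace_add trace_csc)
qed

lemma linear_diss_comp:
  assumes "\<And>\<alpha> \<rho>. diss_term L \<alpha> m \<rho> summable_on UNIV"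
  shows "linear (diss_comp L m)"
  unfolding diss_comp_def[abs_def]
  by (intro linear_compose_sum ballI linear_infsum linear_diss_term assms)

lemma trace_diss_comp: "trace (diss_comp L m \<rho>) = 0"
  unfolding diss_comp_def linear_sum[OF linear_trace]
  by (simp add: bounded_linear_infsum_eq_0[OF bounded_linear_trace trace_diss_term])

lemma linear_lind_comp:
  assumes "\<And>\<alpha> \<rho>. diss_term L \<alpha> m \<rho> summable_on UNIV"
  shows "linear (lind_comp H L m)"
  unfolding lind_comp_def
  by (intro linear_compose_add linear_ham_comp linear_diss_comp assms)

lemma trace_lind_comp: "trace (lind_comp H L m \<rho>) = 0"
  by (simp add: lind_comp_def trace_add trace_ham_comp trace_diss_comp)

lemma linear_traceless_has_nonzero_kernel:
  fixes f :: "'a::{euclidean_space, real_algebra_1}^'n^'n \<Rightarrow> 'a^'n^'n"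
  assumes "linear f" and "\<And>\<rho>. trace (f \<rho>) = 0"
  shows "\<exists>\<rho>. \<rho> \<noteq> 0 \<and> f \<rho> = 0"
proof -
  have "mat 1 \<notin> range f"
    using assms(2) trace_mat_1_neq_0 by (metis rangeE)
  then have "\<not> inj f"
    using linear_injective_imp_surjective[OF assms(1)] by blast
  then show ?thesis
    using linear_injective_0[OF assms(1)] by blast
qed

theorem theorem1:
  fixes \<omega> :: real
    and H :: "int \<Rightarrow> complex^'n^'n"
    and L :: "'j::finite \<Rightarrow> int \<Rightarrow> complex^'n^'n"
    and Leff :: "complex^'n^'n \<Rightarrow> complex^'n^'n"
    and I :: "nat set" and c :: "nat \<Rightarrow> complex"
    and Y Z :: "nat \<Rightarrow> complex^'n^'n \<Rightarrow> complex^'n^'n"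
  assumes omega_pos: "\<omega> > 0"
    and H_conv: "H summable_on UNIV"
    and H_herm: "\<forall>t::real. adj (\<Sum>\<^sub>\<infinity>m. csc (exp (- \<i> * of_int m * of_real (\<omega> * t))) (H m))
                              = (\<Sum>\<^sub>\<infinity>m. csc (exp (- \<i> * of_int m * of_real (\<omega> * t))) (H m))"
    and L_conv: "\<forall>\<alpha>. L \<alpha> summable_on UNIV"
    and D_conv: "\<forall>\<alpha> m \<rho>. diss_term L \<alpha> m \<rho> summable_on UNIV"
    and I_fin: "finite I"
    and Y_nc: "\<forall>i\<in>I. nested_comm (lind_comp H L) (Y i)"
    and Z_nc: "\<forall>i\<in>I. nested_comm (lind_comp H L) (Z i)"
    and Leff_def: "Leff = (\<lambda>\<rho>. lind_comp H L 0 \<rho> + (\<Sum>i\<in>I. csc (c i) (supcomm (Y i) (Z i) \<rho>)))"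
  shows "\<exists>\<rho>. \<rho> \<noteq> 0 \<and> Leff \<rho> = 0"
proof -
  \<comment> \<open>Of the hypotheses only \<open>D_conv\<close> and the shape of \<open>Leff\<close> are needed: the range of
    every nested commutator is traceless whatever \<open>H\<close>, \<omega> and the coefficients \<open>c\<close> are.\<close>
  have linear_L: "linear (lind_comp H L m)" for m
    using D_conv by (simp add: linear_lind_comp)
  have linear_nc: "linear X" if "nested_comm (lind_comp H L) X" for X
    using linear_nested_comm[OF linear_L that] .
  have trace_nc: "trace (X \<rho>) = 0" if "nested_comm (lind_comp H L) X" for X \<rho>
    using trace_nested_comm[OF trace_lind_comp that] .
  have "linear Leff"
    unfolding Leff_def using Y_nc Z_nc
    by (intro linear_compose_add linear_L linear_compose_sum ballI linear_supcomm linear_nc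
        linear_compose[OF _ linear_csc, unfolded o_def]) auto
  moreover have "trace (Leff \<rho>) = 0" for \<rho>
  proof -
    have "trace (csc (c i) (supcomm (Y i) (Z i) \<rho>)) = 0" if "i \<in> I" for i
      using Y_nc Z_nc that by (simp add: trace_csc trace_supcomm trace_nc)
    then show ?thesis
      unfolding Leff_def by (simp add: trace_add linear_sum[OF linear_trace] trace_lind_comp)
  qed
  ultimately show ?thesis
    by (rule linear_traceless_has_nonzero_kernel)
qed

end
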